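(* Let $G$ be a group and let $H$ be a subgroup of $G$ that is closed in the profinite topology of $G$. Then $\mu(H)=\frac{1}{[G:H]}$ (interpreted as $0$ when $[G:H]=\infty$).
   Context: The profinite topology on a group $G$ has as a basis the cosets of finite index subgroups of $G$; equivalently a subgroup is closed iff it is an intersection of finite index subgroups. The profinite measure of a subset $S\subseteq G$ is $\mu(S)=\inf_{\varphi}\frac{|\varphi(S)|}{|\varphi(G)|}$, where $\varphi$ ranges over all epimorphisms from $G$ onto finite groups. *)

theory Defs
  imports "HOL-Algebra.Algebra" Complex_Main
begin

definition finite_index_subgroup :: "('a, 'b) monoid_scheme \<Rightarrow> 'a set \<Rightarrow> bool" where
  "finite_index_subgroup G K \<longleftrightarrow> subgroup K G \<and> finite (rcosets\<^bsub>G\<^esub> K)"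

definition profinite_open :: "('a, 'b) monoid_scheme \<Rightarrow> 'a set \<Rightarrow> bool" where
  "profinite_open G U \<longleftrightarrow> U \<subseteq> carrier G \<and>
     (\<forall>x\<in>U. \<exists>K. finite_index_subgroup G K \<and> x <#\<^bsub>G\<^esub> K \<subseteq> U)"

definition profinite_closed :: "('a, 'b) monoid_scheme \<Rightarrow> 'a set \<Rightarrow> bool" where
  "profinite_closed G S \<longleftrightarrow> S \<subseteq> carrier G \<and> profinite_open G (carrier G - S)"

text \<open>Profinite measure: infimum over all epimorphisms onto finite groups.
  Every finite group is isomorphic to one with carrier in nat, so target groups
  are taken with carrier type nat.\<close>
definition profinite_measure :: "('a, 'b) monoid_scheme \<Rightarrow> 'a set \<Rightarrow> real" where
  "profinite_measure G S = Inf {real (card (\<phi> ` S)) / real (card (\<phi> ` carrier G)) | \<phi> (F :: nat monoid).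
      group F \<and> finite (carrier F) \<and> \<phi> \<in> epi G F}"

end

theory Submission
  imports Defs
begin

text \<open>A finite quotient \<open>\<psi> : G \<rightarrow> F\<close> maps the cosets of \<open>H\<close> onto those of \<open>\<psi> H\<close>, so by
  Lagrange the ratio \<open>|\<psi> H| / |F|\<close> equals \<open>1 / [F : \<psi> H] \<ge> 1 / [G : H]\<close>. If \<open>[G : H]\<close> is
  finite, the action of \<open>G\<close> on the cosets of \<open>H\<close> gives a finite quotient whose kernel lies
  in \<open>H\<close>, and there the bound is attained. If \<open>[G : H]\<close> is infinite, closedness separates
  every point outside \<open>H\<close> from \<open>H\<close> by a finite-index subgroup; intersecting such subgroups
  yields finite-index \<open>L \<supseteq> H\<close> of arbitrarily large index, and the quotient obtained from the
  action on the cosets of \<open>L\<close> bounds the measure of \<open>H\<close> by \<open>1 / [G : L]\<close>.\<close>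

text \<open>The inverse makes right multiplication of cosets a left action, i.e.\ a homomorphism.\<close>

lemma (in group) rcosets_action_hom:
  assumes "subgroup K G"
  shows "(\<lambda>x. \<lambda>C \<in> rcosets K. C #> inv x) \<in> hom G (BijGroup (rcosets K))"
proof -
  interpret K: subgroup K G by (rule assms)
  have rcos_closed: "C #> x \<in> rcosets K" if "C \<in> rcosets K" "x \<in> carrier G" for C x
    using that by (auto simp: RCOSETS_def coset_mult_assoc K.subset)
  have sub: "C \<subseteq> carrier G" if "C \<in> rcosets K" for C
    using that K.rcosets_carrier[OF is_group] by blast
  have bij: "(\<lambda>C \<in> rcosets K. C #> inv x) \<in> Bij (rcosets K)" if "x \<in> carrier G" for x
    unfolding Bij_def
  proof (intro IntI CollectI)
    show "bij_betw (\<lambda>C \<in> rcosets K. C #> inv x) (rcosets K) (rcosets K)"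
      by (rule bij_betw_byWitness[where f' = "\<lambda>C. C #> x"])
        (use that in \<open>auto simp: rcos_closed coset_mult_assoc sub\<close>)
  qed simp
  show ?thesis
    unfolding hom_def
  proof (intro CollectI conjI ballI)
    show "(\<lambda>x. \<lambda>C \<in> rcosets K. C #> inv x) \<in> carrier G \<rightarrow> carrier (BijGroup (rcosets K))"
      using bij by (simp add: BijGroup_def)
    fix x y assume x: "x \<in> carrier G" and y: "y \<in> carrier G"
    show "(\<lambda>C \<in> rcosets K. C #> inv (x \<otimes> y)) =
      (\<lambda>C \<in> rcosets K. C #> inv x) \<otimes>\<^bsub>BijGroup (rcosets K)\<^esub> (\<lambda>C \<in> rcosets K. C #> inv y)"
      using x y bij
      by (intro ext) (auto simp: BijGroup_def compose_def inv_mult_group coset_mult_assoc sub rcos_closed)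
  qed
qed

lemma (in group) rcosets_action_kernel:
  assumes "subgroup K G"
  shows "kernel G (BijGroup (rcosets K)) (\<lambda>x. \<lambda>C \<in> rcosets K. C #> inv x) \<subseteq> K"
proof
  interpret K: subgroup K G by (rule assms)
  fix x assume "x \<in> kernel G (BijGroup (rcosets K)) (\<lambda>x. \<lambda>C \<in> rcosets K. C #> inv x)"
  then have x: "x \<in> carrier G" and "(\<lambda>C \<in> rcosets K. C #> inv x) = (\<lambda>C \<in> rcosets K. C)"
    by (auto simp: kernel_def BijGroup_def)
  moreover have "K \<in> rcosets K"
    using rcosetsI[OF K.subset one_closed] K.subset by simp
  ultimately have "K #> inv x = K" by (metis restrict_apply')
  then have "inv x \<in> K" using rcos_self[OF inv_closed[OF x] assms] by simp
  then show "x \<in> K" using K.m_inv_closed x by fastforce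
qed

lemma finite_Bij: "finite S \<Longrightarrow> finite (Bij S)"
  by (rule finite_subset[of _ "PiE S (\<lambda>_. S)"])
    (auto simp: Bij_def bij_betw_def PiE_iff extensional_def intro!: finite_PiE)

text \<open>The profinite measure only ranges over finite groups with carrier in \<open>nat\<close>: the image
  of \<open>\<phi>\<close> is transported along an injection into \<open>nat\<close>.\<close>

lemma finite_group_hom_nat_epi:
  assumes G: "group G" and F: "group F" and fin: "finite (carrier F)" and \<phi>: "\<phi> \<in> hom G F"
  obtains E :: "nat monoid" and \<psi> where "group E" "finite (carrier E)" "\<psi> \<in> epi G E"
    "kernel G E \<psi> = kernel G F \<phi>"
proof -
  interpret \<phi>: group_hom G F \<phi> using G F \<phi> by (simp add: group_hom_def group_hom_axioms_def)
  obtain e :: "_ \<Rightarrow> nat" where e: "inj_on e (carrier F)"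
    using finite_imp_inj_to_nat_seg[OF fin] by blast
  define \<psi> where "\<psi> = e \<circ> \<phi>"
  have "weak_group_morphism \<psi> (kernel G F \<phi>) G"
  proof (rule weak_group_morphismsI[OF \<phi>.normal_kernel])
    fix a b assume a: "a \<in> carrier G" and b: "b \<in> carrier G"
    have "\<psi> a = \<psi> b \<longleftrightarrow> \<phi> a = \<phi> b"
      using e a b by (auto simp: \<psi>_def dest: inj_onD)
    also have "\<dots> \<longleftrightarrow> \<phi> (a \<otimes>\<^bsub>G\<^esub> inv\<^bsub>G\<^esub> b) = \<one>\<^bsub>F\<^esub>"
      using a b by (simp add: \<phi>.H.inv_solve_right')
    finally show "\<psi> a = \<psi> b \<longleftrightarrow> a \<otimes>\<^bsub>G\<^esub> inv\<^bsub>G\<^esub> b \<in> kernel G F \<phi>"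
      using a b by (simp add: kernel_def)
  qed
  then have "group (image_group \<psi> G)" "\<psi> \<in> hom G (image_group \<psi> G)"
    "kernel G (image_group \<psi> G) \<psi> = kernel G F \<phi>"
    using \<phi>.G.image_group_is_group \<phi>.G.weak_group_morphism_is_hom \<phi>.G.weak_group_morphism_ker
    by blast+
  moreover have "finite (carrier (image_group \<psi> G))"
  proof (rule finite_subset)
    show "carrier (image_group \<psi> G) \<subseteq> e ` carrier F"
      by (auto simp: image_group_carrier \<psi>_def)
  qed (use fin in simp)
  ultimately show thesis
    by (intro that) (auto simp: epi_def image_group_carrier)
qed

lemma (in group) finite_index_subgroup_kernel_epi:
  assumes "finite_index_subgroup G K"
  obtains F :: "nat monoid" and \<psi> where "group F" "finite (carrier F)" "\<psi> \<in> epi G F"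
    "kernel G F \<psi> \<subseteq> K"
proof -
  have K: "subgroup K G" and fin: "finite (rcosets K)"
    using assms by (auto simp: finite_index_subgroup_def)
  have finBij: "finite (carrier (BijGroup (rcosets K)))"
    using finite_Bij[OF fin] by (simp add: BijGroup_def)
  obtain F :: "nat monoid" and \<psi> where F: "group F" "finite (carrier F)" "\<psi> \<in> epi G F"
    and ker: "kernel G F \<psi> = kernel G (BijGroup (rcosets K)) (\<lambda>x. \<lambda>C \<in> rcosets K. C #> inv x)"
    by (rule finite_group_hom_nat_epi[OF is_group group_BijGroup finBij rcosets_action_hom[OF K]])
  show thesis
    by (rule that[OF F]) (simp add: ker rcosets_action_kernel[OF K])
qed

lemma (in group) epi_group_hom:
  assumes "group F" and "\<psi> \<in> epi G F"
  shows "group_hom G F \<psi>"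
  using assms is_group by (simp add: group_hom_def group_hom_axioms_def epi_def)

lemma (in group_hom) rcosets_image:
  assumes surj: "h ` carrier G = carrier H" and K: "subgroup K G"
  shows "rcosets\<^bsub>H\<^esub> (h ` K) = (\<lambda>C. h ` C) ` (rcosets K)"
proof -
  interpret K: subgroup K G by (rule K)
  have "h ` (K #> x) = h ` K #>\<^bsub>H\<^esub> h x" if "x \<in> carrier G" for x
    using that K.subset by (force simp: r_coset_def)
  then have "rcosets\<^bsub>H\<^esub> (h ` K) = (\<lambda>x. h ` (K #> x)) ` carrier G"
    unfolding RCOSETS_def surj[symmetric] by auto
  then show ?thesis by (auto simp: RCOSETS_def)
qed

lemma (in group_hom) inj_on_image_rcosets:
  assumes K: "subgroup K G" and ker: "kernel G H h \<subseteq> K"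
  shows "inj_on (\<lambda>C. h ` C) (rcosets K)"
proof (rule inj_onI)
  interpret K: subgroup K G by (rule K)
  fix C D assume C: "C \<in> rcosets K" and D: "D \<in> rcosets K" and eq: "h ` C = h ` D"
  obtain x where x: "x \<in> carrier G" "C = K #> x" using C by (auto simp: RCOSETS_def)
  obtain y where y: "y \<in> carrier G" "D = K #> y" using D by (auto simp: RCOSETS_def)
  have "h x \<in> h ` D" using eq x G.rcos_self[OF x(1) K] by blast
  then obtain z where z: "z \<in> D" "h x = h z" by blast
  have zc: "z \<in> carrier G" using z(1) y G.r_coset_subset_G[OF K.subset y(1)] by blast
  have "x \<otimes> inv z \<in> kernel G H h"
    using x(1) zc z(2) by (simp add: kernel_def)
  then have "x \<in> K #> z" using ker K.rcos_module_rev[OF G.is_group zc x(1)] by blast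
  then show "C = D"
    using x y z(1) G.repr_independence[OF _ zc K] G.repr_independence[OF _ y(1) K] by metis
qed

lemma (in group_hom) card_rcosets_image_le:
  assumes surj: "h ` carrier G = carrier H" and K: "subgroup K G" and fin: "finite (rcosets K)"
  shows "card (rcosets\<^bsub>H\<^esub> (h ` K)) \<le> card (rcosets K)"
  unfolding rcosets_image[OF surj K] using fin by (rule card_image_le)

lemma (in group_hom) card_rcosets_image_eq:
  assumes surj: "h ` carrier G = carrier H" and fin: "finite (carrier H)"
    and K: "subgroup K G" and ker: "kernel G H h \<subseteq> K"
  shows "finite (rcosets K)" and "card (rcosets\<^bsub>H\<^esub> (h ` K)) = card (rcosets K)"
proof -
  have "finite (rcosets\<^bsub>H\<^esub> (h ` K))"
    using H.rcosets_subset_PowG[OF subgroup_img_is_subgroup[OF K]] fin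
    by (meson finite_Pow_iff finite_subset)
  then show "finite (rcosets K)"
    using inj_on_image_rcosets[OF K ker] finite_imageD by (metis rcosets_image[OF surj K])
  show "card (rcosets\<^bsub>H\<^esub> (h ` K)) = card (rcosets K)"
    using card_image[OF inj_on_image_rcosets[OF K ker]] rcosets_image[OF surj K] by simp
qed

lemma (in group_hom) card_image_ratio:
  assumes surj: "h ` carrier G = carrier H" and fin: "finite (carrier H)" and K: "subgroup K G"
  shows "real (card (h ` K)) / real (card (h ` carrier G)) = 1 / real (card (rcosets\<^bsub>H\<^esub> (h ` K)))"
proof -
  have lagrange: "card (rcosets\<^bsub>H\<^esub> (h ` K)) * card (h ` K) = card (carrier H)"
    using H.lagrange[OF subgroup_img_is_subgroup[OF K]] by (simp add: order_def)
  have "card (carrier H) > 0" using fin H.one_closed card_gt_0_iff by blast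
  moreover from this have "card (rcosets\<^bsub>H\<^esub> (h ` K)) > 0" using lagrange by (metis gr0I mult_0)
  ultimately show ?thesis
    using lagrange surj by (simp add: field_simps flip: of_nat_mult)
qed

lemma (in group) finite_index_subgroup_carrier: "finite_index_subgroup G (carrier G)"
proof -
  have "rcosets (carrier G) \<subseteq> {carrier G}"
    using subgroup.rcos_const[OF subgroup_self is_group] by (auto simp: RCOSETS_def)
  then show ?thesis
    using subgroup_self by (simp add: finite_index_subgroup_def finite_subset)
qed

lemma (in group) finite_index_subgroup_Int:
  assumes A: "finite_index_subgroup G A" and B: "finite_index_subgroup G B"
  shows "finite_index_subgroup G (A \<inter> B)"
proof -
  have sA: "subgroup A G" and fA: "finite (rcosets A)"
    and sB: "subgroup B G" and fB: "finite (rcosets B)"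
    using A B by (auto simp: finite_index_subgroup_def)
  have sAB: "subgroup (A \<inter> B) G" using subgroups_Inter_pair[OF sA sB] .
  have "(A \<inter> B) #> x = (A #> x) \<inter> (B #> x)" if "x \<in> carrier G" for x
    using subgroup.rcos_module[OF sAB is_group that] subgroup.rcos_module[OF sA is_group that]
      subgroup.rcos_module[OF sB is_group that] r_coset_subset_G[OF _ that]
      subgroup.subset[OF sA] subgroup.subset[OF sB] subgroup.subset[OF sAB]
    by blast
  then have "rcosets (A \<inter> B) \<subseteq> (\<lambda>(C, D). C \<inter> D) ` ((rcosets A) \<times> (rcosets B))"
    by (force simp: RCOSETS_def)
  then have "finite (rcosets (A \<inter> B))"
    using fA fB by (meson finite_SigmaI finite_imageI finite_subset)
  with sAB show ?thesis by (simp add: finite_index_subgroup_def)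
qed

lemma (in group) rcosets_supergroup:
  assumes A: "subgroup A G" and B: "subgroup B G" and AB: "A \<subseteq> B"
  shows "rcosets B = (\<lambda>C. B <#> C) ` (rcosets A)"
proof -
  have "B <#> A = B" by (rule set_mult_subgroup_idem[OF B subgroup_incl[OF A B AB]])
  then have "B <#> (A #> x) = B #> x" if "x \<in> carrier G" for x
    using setmult_rcos_assoc[OF subgroup.subset[OF B] subgroup.subset[OF A] that] by simp
  then show ?thesis by (auto simp: RCOSETS_def)
qed

lemma (in group) card_rcosets_less:
  assumes A: "subgroup A G" and B: "subgroup B G" and AB: "A \<subseteq> B"
    and fin: "finite (rcosets A)" and x: "x \<in> B" "x \<notin> A"
  shows "card (rcosets B) < card (rcosets A)"
proof -
  have xc: "x \<in> carrier G" using x(1) subgroup.subset[OF B] by blast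
  have "A \<in> rcosets A" "A #> x \<in> rcosets A"
    using rcosetsI[OF subgroup.subset[OF A]] xc coset_mult_one[OF subgroup.subset[OF A]]
    by (metis one_closed)+
  moreover have "A \<noteq> A #> x" using rcos_self[OF xc A] x(2) by blast
  moreover have "B <#> A = B <#> (A #> x)"
    using setmult_rcos_assoc[OF subgroup.subset[OF B] subgroup.subset[OF A] xc]
      set_mult_subgroup_idem[OF B subgroup_incl[OF A B AB]] subgroup.rcos_const[OF B is_group x(1)]
    by simp
  ultimately have "\<not> inj_on (\<lambda>C. B <#> C) (rcosets A)" by (meson inj_onD)
  then show ?thesis
    using fin card_image_le inj_on_iff_eq_card rcosets_supergroup[OF A B AB]
    by (metis le_neq_implies_less)
qed

lemma (in group) closed_subgroup_separation:
  assumes H: "subgroup H G" and closed: "profinite_closed G H"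
    and x: "x \<in> carrier G" "x \<notin> H"
  obtains L where "finite_index_subgroup G L" "H \<subseteq> L" "x \<notin> L"
proof -
  obtain K where K: "finite_index_subgroup G K" and xK: "x <# K \<subseteq> carrier G - H"
    using closed x unfolding profinite_closed_def profinite_open_def by blast
  obtain F :: "nat monoid" and \<psi> where F: "group F" "finite (carrier F)" "\<psi> \<in> epi G F"
    and ker: "kernel G F \<psi> \<subseteq> K"
    by (rule finite_index_subgroup_kernel_epi[OF K])
  interpret \<psi>: group_hom G F \<psi> using epi_group_hom F by blast
  have surj: "\<psi> ` carrier G = carrier F" using F(3) by (simp add: epi_def)
  define N where "N = kernel G F \<psi>"
  have N: "N \<lhd> G" unfolding N_def by (rule \<psi>.normal_kernel)
  have subL: "subgroup (H <#> N) G"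
    using mult_norm_subgroup[OF N H] commut_normal[OF H N] by simp
  have "N \<subseteq> H <#> N"
    using subgroup.one_closed[OF H] normal_imp_subgroup[OF N]
    by (force simp: set_mult_def dest: subgroup.mem_carrier)
  then have "finite_index_subgroup G (H <#> N)"
    using \<psi>.card_rcosets_image_eq(1)[OF surj F(2) subL] subL
    by (simp add: finite_index_subgroup_def N_def)
  moreover have "H \<subseteq> H <#> N"
    using subgroup.one_closed[OF normal_imp_subgroup[OF N]] subgroup.subset[OF H]
    by (force simp: set_mult_def)
  moreover have "x \<notin> H <#> N"
  proof
    assume "x \<in> H <#> N"
    then obtain h n where hn: "h \<in> H" "n \<in> N" "x = h \<otimes> n" by (auto simp: set_mult_def)
    have nc: "n \<in> carrier G" and "inv n \<in> K"
      using hn(2) ker subgroup.m_inv_closed[OF normal_imp_subgroup[OF N]]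
      by (auto simp: N_def kernel_def)
    moreover have "h = x \<otimes> inv n"
      using hn subgroup.subset[OF H] nc by (auto simp: m_assoc)
    ultimately have "h \<in> x <# K" by (auto simp: l_coset_def)
    with xK hn(1) show False by blast
  qed
  ultimately show thesis by (rule that)
qed

lemma (in group) closed_subgroup_unbounded_index:
  assumes H: "subgroup H G" and closed: "profinite_closed G H" and inf: "infinite (rcosets H)"
  shows "\<exists>L. finite_index_subgroup G L \<and> H \<subseteq> L \<and> n \<le> card (rcosets L)"
proof (induction n)
  case 0
  show ?case using finite_index_subgroup_carrier subgroup.subset[OF H] by blast
next
  case (Suc n)
  then obtain L where L: "finite_index_subgroup G L" "H \<subseteq> L" "n \<le> card (rcosets L)"
    by blast
  then have "L \<noteq> H" using inf by (auto simp: finite_index_subgroup_def)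
  with L(2) obtain x where x: "x \<in> L" "x \<notin> H" by blast
  have subL: "subgroup L G" using L(1) by (simp add: finite_index_subgroup_def)
  obtain K where K: "finite_index_subgroup G K" "H \<subseteq> K" "x \<notin> K"
    using closed_subgroup_separation[OF H closed _ x(2)] x(1) subgroup.subset[OF subL] by blast
  have LK: "finite_index_subgroup G (L \<inter> K)" by (rule finite_index_subgroup_Int[OF L(1) K(1)])
  then have "card (rcosets L) < card (rcosets (L \<inter> K))"
    using card_rcosets_less[OF _ subL _ _ x(1)] K(3) by (auto simp: finite_index_subgroup_def)
  with LK L(2,3) K(2) show ?case by (intro exI[of _ "L \<inter> K"]) auto
qed

lemma (in group) profinite_measure_le:
  fixes F :: "nat monoid"
  assumes "group F" and "finite (carrier F)" and "\<psi> \<in> epi G F"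
  shows "profinite_measure G S \<le> real (card (\<psi> ` S)) / real (card (\<psi> ` carrier G))"
  unfolding profinite_measure_def
  by (rule cInf_lower) (use assms in blast, auto intro!: bdd_belowI[of _ 0])

lemma (in group) profinite_measure_nonneg: "0 \<le> profinite_measure G S"
proof -
  obtain F :: "nat monoid" and \<psi> where "group F" "finite (carrier F)" "\<psi> \<in> epi G F"
    using finite_index_subgroup_kernel_epi[OF finite_index_subgroup_carrier] by blast
  then show ?thesis
    unfolding profinite_measure_def by (intro cInf_greatest) auto
qed

lemma (in group) profinite_measure_finite_index:
  assumes H: "subgroup H G" and fin: "finite (rcosets H)"
  shows "profinite_measure G H = 1 / real (card (rcosets H))"
  unfolding profinite_measure_def
proof (rule cInf_eq_minimum)
  obtain F :: "nat monoid" and \<psi> where F: "group F" "finite (carrier F)" "\<psi> \<in> epi G F"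
    and ker: "kernel G F \<psi> \<subseteq> H"
    using finite_index_subgroup_kernel_epi H fin unfolding finite_index_subgroup_def by metis
  interpret \<psi>: group_hom G F \<psi> using epi_group_hom F by blast
  have surj: "\<psi> ` carrier G = carrier F" using F(3) by (simp add: epi_def)
  have "real (card (\<psi> ` H)) / real (card (\<psi> ` carrier G)) = 1 / real (card (rcosets H))"
    using \<psi>.card_image_ratio[OF surj F(2) H] \<psi>.card_rcosets_image_eq(2)[OF surj F(2) H ker]
    by simp
  with F show "1 / real (card (rcosets H)) \<in> {real (card (\<phi> ` H)) / real (card (\<phi> ` carrier G)) |
      \<phi> (F :: nat monoid). group F \<and> finite (carrier F) \<and> \<phi> \<in> epi G F}"
    by (intro CollectI exI[of _ \<psi>] exI[of _ F]) simp
next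
  fix r assume "r \<in> {real (card (\<phi> ` H)) / real (card (\<phi> ` carrier G)) |
      \<phi> (F :: nat monoid). group F \<and> finite (carrier F) \<and> \<phi> \<in> epi G F}"
  then obtain F :: "nat monoid" and \<phi> where F: "group F" "finite (carrier F)" "\<phi> \<in> epi G F"
    and r: "r = real (card (\<phi> ` H)) / real (card (\<phi> ` carrier G))"
    by blast
  interpret \<phi>: group_hom G F \<phi> using epi_group_hom F by blast
  have surj: "\<phi> ` carrier G = carrier F" using F(3) by (simp add: epi_def)
  have "rcosets\<^bsub>F\<^esub> (\<phi> ` H) \<noteq> {}"
    using \<phi>.H.rcosetsI[of "\<phi> ` H" "\<one>\<^bsub>F\<^esub>"] \<phi>.subgroup_img_is_subgroup[OF H]
    by (auto dest: subgroup.subset)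
  then have "card (rcosets\<^bsub>F\<^esub> (\<phi> ` H)) > 0"
    using fin \<phi>.rcosets_image[OF surj H] by (simp add: card_gt_0_iff)
  then show "1 / real (card (rcosets H)) \<le> r"
    unfolding r \<phi>.card_image_ratio[OF surj F(2) H]
    using \<phi>.card_rcosets_image_le[OF surj H fin] by (simp add: frac_le)
qed

lemma (in group) profinite_measure_eq_0_if_unbounded_index:
  assumes unbounded: "\<And>n. \<exists>L. finite_index_subgroup G L \<and> S \<subseteq> L \<and> n \<le> card (rcosets L)"
  shows "profinite_measure G S = 0"
proof -
  have le: "profinite_measure G S \<le> 1 / real n" if "n > 0" for n
  proof -
    obtain L where L: "finite_index_subgroup G L" "S \<subseteq> L" "n \<le> card (rcosets L)"
      using unbounded by blast
    have subL: "subgroup L G" using L(1) by (simp add: finite_index_subgroup_def)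
    obtain F :: "nat monoid" and \<psi> where F: "group F" "finite (carrier F)" "\<psi> \<in> epi G F"
      and ker: "kernel G F \<psi> \<subseteq> L"
      by (rule finite_index_subgroup_kernel_epi[OF L(1)])
    interpret \<psi>: group_hom G F \<psi> using epi_group_hom F by blast
    have surj: "\<psi> ` carrier G = carrier F" using F(3) by (simp add: epi_def)
    have "finite (\<psi> ` L)"
      by (rule finite_subset[OF _ F(2)]) (use subgroup.subset[OF subL] surj in auto)
    then have "card (\<psi> ` S) \<le> card (\<psi> ` L)" using L(2) by (intro card_mono image_mono)
    then have "real (card (\<psi> ` S)) / real (card (\<psi> ` carrier G))
        \<le> real (card (\<psi> ` L)) / real (card (\<psi> ` carrier G))"
      by (simp add: divide_right_mono)
    then have "profinite_measure G S \<le> real (card (\<psi> ` L)) / real (card (\<psi> ` carrier G))"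
      by (rule order_trans[OF profinite_measure_le[OF F]])
    also have "\<dots> = 1 / real (card (rcosets L))"
      using \<psi>.card_image_ratio[OF surj F(2) subL] \<psi>.card_rcosets_image_eq(2)[OF surj F(2) subL ker]
      by simp
    also have "\<dots> \<le> 1 / real n" using L(3) that by (simp add: frac_le)
    finally show ?thesis .
  qed
  have "profinite_measure G S \<le> 0"
  proof (rule ccontr)
    assume "\<not> profinite_measure G S \<le> 0"
    then obtain n where n: "n > 0" "inverse (real n) < profinite_measure G S"
      using ex_inverse_of_nat_less[of "profinite_measure G S"] by auto
    with le[OF n(1)] show False by (simp add: inverse_eq_divide)
  qed
  then show ?thesis using profinite_measure_nonneg[of S] by simp
qed

theorem proposition2p1:
  fixes G :: "('a, 'b) monoid_scheme" and H :: "'a set"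
  assumes "group G" and "subgroup H G" and "profinite_closed G H"
  shows "profinite_measure G H =
           (if finite (rcosets\<^bsub>G\<^esub> H) then 1 / real (card (rcosets\<^bsub>G\<^esub> H)) else 0)"
proof -
  interpret group G by (rule assms(1))
  show ?thesis
  proof (cases "finite (rcosets\<^bsub>G\<^esub> H)")
    case True
    then show ?thesis using profinite_measure_finite_index[OF assms(2)] by simp
  next
    case False
    then show ?thesis
      using profinite_measure_eq_0_if_unbounded_index closed_subgroup_unbounded_index[OF assms(2,3)]
      by simp
  qed
qed

end
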